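(* For every $n\ge 7$, the graph $G_n$ is not an IP-SEG* graph.
   Context: Let $L_1$ and $L_2$ be two distinct parallel horizontal lines in the plane. A closed straight line segment is an interval segment if both of its endpoints lie on the same line $L_i$, and a permutation segment if one endpoint lies on $L_1$ and the other on $L_2$. An IP-SEG model is a finite family of interval and permutation segments; its intersection graph has one vertex per segment, adjacent iff the segments intersect. An IP-SEG* model is an IP-SEG model in which all interval segments lie on the same line $L_i$; a graph is an IP-SEG* graph if it is isomorphic to the intersection graph of an IP-SEG* model. For $n\ge 3$, $G_n$ is the graph on $3n$ vertices $v_1,\dots,v_n,w_1,\dots,w_n,z_1,\dots,z_n$ whose edges are $v_iv_{i+1}$ (indices mod $n$), $v_iw_i$ and $w_iz_i$ for $1\le i\le n$, and no others (a chordless cycle with a pendant path of length $2$ attached at each cycle vertex). *)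

theory Defs
  imports "HOL-Analysis.Analysis"
begin

text \<open>The two distinct parallel
horizontal lines are L1 = {y = a} and L2 = {y = b} with a \<noteq> b.\<close>

type_synonym pt = "real \<times> real"
type_synonym seg = "pt \<times> pt"

definition seg_set :: "seg \<Rightarrow> pt set" where
  "seg_set s = closed_segment (fst s) (snd s)"

definition is_int_seg :: "real \<Rightarrow> seg \<Rightarrow> bool" where
  "is_int_seg c s \<longleftrightarrow> snd (fst s) = c \<and> snd (snd s) = c"

definition is_perm_seg :: "real \<Rightarrow> real \<Rightarrow> seg \<Rightarrow> bool" where
  "is_perm_seg a b s \<longleftrightarrow>
     (snd (fst s) = a \<and> snd (snd s) = b) \<or> (snd (fst s) = b \<and> snd (snd s) = a)"

text \<open>A graph (V, E) is an IP-SEG* graph w.r.t. the lines y = a and y = b iff there is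
an assignment of segments to vertices (a family indexed by the vertices; this captures
isomorphism) such that every segment is a permutation segment or an interval segment,
all interval segments lie on one common line y = c with c \<in> {a, b}, and distinct
vertices are adjacent iff their segments intersect.\<close>
definition ipseg_star_graph ::
  "real \<Rightarrow> real \<Rightarrow> 'v set \<Rightarrow> ('v \<Rightarrow> 'v \<Rightarrow> bool) \<Rightarrow> bool" where
  "ipseg_star_graph a b V E \<longleftrightarrow>
     (\<exists>c \<in> {a, b}. \<exists>f :: 'v \<Rightarrow> seg.
        (\<forall>v \<in> V. is_perm_seg a b (f v) \<or> is_int_seg c (f v)) \<and>
        (\<forall>u \<in> V. \<forall>v \<in> V. u \<noteq> v \<longrightarrow>
            (E u v \<longleftrightarrow> seg_set (f u) \<inter> seg_set (f v) \<noteq> {})))"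

text \<open>The graph G_n: vertex (0, i) is v_(i+1), (1, i) is w_(i+1), (2, i) is z_(i+1),
for i < n.\<close>
definition Gn_verts :: "nat \<Rightarrow> (nat \<times> nat) set" where
  "Gn_verts n = {0..<3} \<times> {0..<n}"

definition Gn_adj :: "nat \<Rightarrow> nat \<times> nat \<Rightarrow> nat \<times> nat \<Rightarrow> bool" where
  "Gn_adj n x y \<longleftrightarrow>
     (fst x = 0 \<and> fst y = 0 \<and>
        (snd y = (snd x + 1) mod n \<or> snd x = (snd y + 1) mod n)) \<or>
     (snd x = snd y \<and> ({fst x, fst y} = {0, 1} \<or> {fst x, fst y} = {1, 2}))"

end

theory Submission
  imports Defs
begin

text \<open>
  Put the line carrying the interval segments at y = c.  Every segment leaves a trace on it
  (a point for a permutation segment, an interval otherwise); disjoint segments have disjoint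
  traces, so one lies left of the other, and a chain of pairwise meeting segments avoiding a
  segment p stays on one side of p, unless p is an interval segment and two consecutive links
  are crossing permutation segments.

  Along the cycle this excludes three consecutive interval vertices (the pendant w of the
  middle one would be a permutation segment strictly between the outer two, which the rest of
  the cycle joins without meeting w) and the pattern interval, permutation, interval (the
  outer two would share the foot of the middle one).  So two steps after an interval vertex
  comes a permutation vertex, and for n >= 7 there are permutation vertices v_x and v_(x+i),
  i in {2, 3}, with only interval vertices between them (or all of v_1, v_3, v_5 are
  permutation vertices).  With v_(x+i+2) they form three pairwise disjoint segments, each
  avoided by the arc of the cycle joining the other two; so none of them separates the other
  two, which is impossible for three disjoint traces on a line.\<close>

lemma mem_horizontal_segment:
  fixes x y l r c :: real
  shows "(x, y) \<in> closed_segment (l, c) (r, c) \<longleftrightarrow> y = c \<and> min l r \<le> x \<and> x \<le> max l r"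
proof -
  have "(x, y) \<in> closed_segment (l, c) (r, c) \<longleftrightarrow> y = c \<and> x \<in> closed_segment l r"
    by (auto simp: in_segment algebra_simps)
  then show ?thesis
    by (auto simp: closed_segment_eq_real_ivl min_def max_def)
qed

lemma mem_crossing_segment:
  fixes x y t s c d :: real
  shows "(x, y) \<in> closed_segment (t, c) (s, d) \<longleftrightarrow>
    (\<exists>u. 0 \<le> u \<and> u \<le> 1 \<and> x = (1 - u) * t + u * s \<and> y = (1 - u) * c + u * d)"
  by (auto simp: in_segment)

lemma crossing_segment_base_point:
  fixes x t s c d :: real
  assumes "c \<noteq> d"
  shows "(x, c) \<in> closed_segment (t, c) (s, d) \<longleftrightarrow> x = t"
proof
  assume "(x, c) \<in> closed_segment (t, c) (s, d)"
  then obtain u where "x = (1 - u) * t + u * s" "u * (d - c) = 0"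
    by (auto simp: mem_crossing_segment algebra_simps)
  with assms show "x = t" by simp
qed simp

lemma horizontal_segments_intersect_iff:
  fixes l r l' r' c :: real
  shows "closed_segment (l, c) (r, c) \<inter> closed_segment (l', c) (r', c) \<noteq> {} \<longleftrightarrow>
    min l r \<le> max l' r' \<and> min l' r' \<le> max l r"
proof
  assume "closed_segment (l, c) (r, c) \<inter> closed_segment (l', c) (r', c) \<noteq> {}"
  then show "min l r \<le> max l' r' \<and> min l' r' \<le> max l r"
    by (force simp: mem_horizontal_segment)
next
  assume "min l r \<le> max l' r' \<and> min l' r' \<le> max l r"
  then have "(max (min l r) (min l' r'), c) \<in>
      closed_segment (l, c) (r, c) \<inter> closed_segment (l', c) (r', c)"
    by (auto simp: mem_horizontal_segment)
  then show "closed_segment (l, c) (r, c) \<inter> closed_segment (l', c) (r', c) \<noteq> {}"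
    by blast
qed

lemma crossing_horizontal_segments_intersect_iff:
  fixes t s l r c d :: real
  assumes "c \<noteq> d"
  shows "closed_segment (t, c) (s, d) \<inter> closed_segment (l, c) (r, c) \<noteq> {} \<longleftrightarrow>
    min l r \<le> t \<and> t \<le> max l r"
proof
  assume "closed_segment (t, c) (s, d) \<inter> closed_segment (l, c) (r, c) \<noteq> {}"
  then obtain x y where "(x, y) \<in> closed_segment (t, c) (s, d)" "(x, y) \<in> closed_segment (l, c) (r, c)"
    by auto
  with assms show "min l r \<le> t \<and> t \<le> max l r"
    by (auto simp: crossing_segment_base_point mem_horizontal_segment)
next
  assume "min l r \<le> t \<and> t \<le> max l r"
  then have "(t, c) \<in> closed_segment (t, c) (s, d) \<inter> closed_segment (l, c) (r, c)"
    by (simp add: mem_horizontal_segment)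
  then show "closed_segment (t, c) (s, d) \<inter> closed_segment (l, c) (r, c) \<noteq> {}"
    by blast
qed

lemma zero_mem_closed_segment_iff:
  fixes \<alpha> \<beta> :: real
  shows "0 \<in> closed_segment \<alpha> \<beta> \<longleftrightarrow> \<alpha> * \<beta> \<le> 0"
  by (auto simp: closed_segment_eq_real_ivl mult_le_0_iff)

lemma crossing_segments_intersect_iff:
  fixes t s t' s' c d :: real
  assumes "c \<noteq> d"
  shows "closed_segment (t, c) (s, d) \<inter> closed_segment (t', c) (s', d) \<noteq> {} \<longleftrightarrow>
    (t - t') * (s - s') \<le> 0"
proof -
  text \<open>The height of a common point fixes the same parameter on both segments.\<close>
  have "closed_segment (t, c) (s, d) \<inter> closed_segment (t', c) (s', d) \<noteq> {} \<longleftrightarrow>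
      (\<exists>u. 0 \<le> u \<and> u \<le> 1 \<and> (1 - u) * t + u * s = (1 - u) * t' + u * s')"
  proof
    assume "closed_segment (t, c) (s, d) \<inter> closed_segment (t', c) (s', d) \<noteq> {}"
    then obtain u u' where u: "0 \<le> u" "u \<le> 1"
        and eq: "(1 - u) * t + u * s = (1 - u') * t' + u' * s'"
          "(1 - u) * c + u * d = (1 - u') * c + u' * d"
      by (auto simp: mem_crossing_segment)
    from eq(2) have "(u - u') * (d - c) = 0"
      by (simp add: algebra_simps)
    with assms have "u' = u" by simp
    with u eq(1) show "\<exists>u. 0 \<le> u \<and> u \<le> 1 \<and> (1 - u) * t + u * s = (1 - u) * t' + u * s'"
      by blast
  next
    assume "\<exists>u. 0 \<le> u \<and> u \<le> 1 \<and> (1 - u) * t + u * s = (1 - u) * t' + u * s'"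
    then obtain u where "0 \<le> u" "u \<le> 1" "(1 - u) * t + u * s = (1 - u) * t' + u * s'"
      by blast
    then have "((1 - u) * t + u * s, (1 - u) * c + u * d) \<in>
        closed_segment (t, c) (s, d) \<inter> closed_segment (t', c) (s', d)"
      by (auto simp: mem_crossing_segment)
    then show "closed_segment (t, c) (s, d) \<inter> closed_segment (t', c) (s', d) \<noteq> {}"
      by blast
  qed
  also have "\<dots> \<longleftrightarrow> 0 \<in> closed_segment (t - t') (s - s')"
    by (auto simp: in_segment algebra_simps)
  finally show ?thesis
    by (simp add: zero_mem_closed_segment_iff)
qed

text \<open>A segment as seen from the line y = c of the interval segments: \<open>PSeg t s\<close> joins (t, c)
  to (s, d) on the other line, \<open>ISeg l r\<close> joins (l, c) to (r, c). Its trace on y = c is the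
  interval from \<open>lft\<close> to \<open>rgt\<close>.\<close>
datatype ipseg = is_PSeg: PSeg real real | ISeg real real

primrec lft :: "ipseg \<Rightarrow> real" where
  "lft (PSeg t s) = t"
| "lft (ISeg l r) = min l r"

primrec rgt :: "ipseg \<Rightarrow> real" where
  "rgt (PSeg t s) = t"
| "rgt (ISeg l r) = max l r"

fun meets :: "ipseg \<Rightarrow> ipseg \<Rightarrow> bool" where
  "meets (PSeg t s) (PSeg t' s') \<longleftrightarrow> (t - t') * (s - s') \<le> 0"
| "meets x y \<longleftrightarrow> lft x \<le> rgt y \<and> lft y \<le> rgt x"

definition left_of :: "ipseg \<Rightarrow> ipseg \<Rightarrow> bool" where
  "left_of x y \<longleftrightarrow> rgt x < lft y"

primrec ipseg_set :: "real \<Rightarrow> real \<Rightarrow> ipseg \<Rightarrow> pt set" where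
  "ipseg_set c d (PSeg t s) = closed_segment (t, c) (s, d)"
| "ipseg_set c d (ISeg l r) = closed_segment (l, c) (r, c)"

lemma ipseg_sets_intersect_iff:
  assumes "c \<noteq> d"
  shows "ipseg_set c d x \<inter> ipseg_set c d y \<noteq> {} \<longleftrightarrow> meets x y"
proof (cases x)
  case PSeg
  with assms show ?thesis
    by (cases y) (auto simp: crossing_segments_intersect_iff crossing_horizontal_segments_intersect_iff)
next
  case (ISeg l r)
  with assms crossing_horizontal_segments_intersect_iff[OF assms, of _ _ l r] show ?thesis
    by (cases y) (auto simp: horizontal_segments_intersect_iff Int_commute)
qed

lemma lft_le_rgt: "lft x \<le> rgt x"
  by (cases x) simp_all

lemma meets_refl: "meets x x"
  by (cases x) (simp_all add: lft_le_rgt)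

lemma meets_sym: "meets x y \<longleftrightarrow> meets y x"
  by (cases x; cases y) (auto simp: algebra_simps)

lemma meets_ISeg:
  assumes "\<not> is_PSeg x \<or> \<not> is_PSeg y"
  shows "meets x y \<longleftrightarrow> lft x \<le> rgt y \<and> lft y \<le> rgt x"
  using assms by (cases x; cases y) auto

lemma lft_eq_rgt_PSeg: "is_PSeg x \<Longrightarrow> lft x = rgt x"
  by (cases x) simp_all

lemma left_of_asym: "left_of x y \<Longrightarrow> \<not> left_of y x"
  using lft_le_rgt[of x] lft_le_rgt[of y] by (simp add: left_of_def)

lemma not_meets_left_of: "\<not> meets x y \<Longrightarrow> left_of x y \<or> left_of y x"
  by (cases x; cases y) (auto simp: left_of_def mult_le_0_iff)

lemma ISeg_PSeg_ISeg_meets: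
  assumes "\<not> is_PSeg a" "is_PSeg b" "\<not> is_PSeg c" "meets a b" "meets b c"
  shows "meets a c"
  using assms lft_eq_rgt_PSeg[OF assms(2)] by (auto simp: meets_ISeg)

lemma meets_ISeg_mono:
  assumes "\<not> is_PSeg a" "\<not> is_PSeg b" "lft b \<le> lft a" "rgt a \<le> rgt b" "meets x a"
  shows "meets x b"
  using assms by (auto simp: meets_ISeg)

lemma one_of_three_separates:
  assumes "\<not> meets x y" "\<not> meets y z" "\<not> meets x z"
  shows "(left_of y x \<noteq> left_of z x) \<or> (left_of x y \<noteq> left_of z y) \<or> (left_of x z \<noteq> left_of y z)"
  using not_meets_left_of[OF assms(1)] not_meets_left_of[OF assms(2)] not_meets_left_of[OF assms(3)]
    lft_le_rgt[of x] lft_le_rgt[of y] lft_le_rgt[of z]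
  unfolding left_of_def by argo

lemma crossings_same_side:
  fixes a a' b b' c c' :: real
  assumes "(a - b) * (a' - b') \<le> 0" "0 < (a - c) * (a' - c')" "0 < (b - c) * (b' - c')"
  shows "a < c \<longleftrightarrow> b < c"
  using assms by (auto simp: zero_less_mult_iff mult_le_0_iff)

lemma meets_same_side:
  assumes "meets x y" "\<not> meets x p" "\<not> meets y p"
    and "is_PSeg x \<Longrightarrow> is_PSeg y \<Longrightarrow> is_PSeg p"
  shows "left_of x p \<longleftrightarrow> left_of y p"
proof (cases "is_PSeg x \<and> is_PSeg y")
  case True
  with assms(4) obtain t s t' s' tp sp where "x = PSeg t s" "y = PSeg t' s'" "p = PSeg tp sp"
    by (metis ipseg.collapse(1))
  with assms(1-3) show ?thesis
    by (simp add: left_of_def crossings_same_side not_le)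
next
  case False
  with assms(1) have "lft x \<le> rgt y" "lft y \<le> rgt x"
    by (auto simp: meets_ISeg)
  with not_meets_left_of[OF assms(2)] not_meets_left_of[OF assms(3)] show ?thesis
    using lft_le_rgt[of x] lft_le_rgt[of y] lft_le_rgt[of p]
    unfolding left_of_def by argo
qed

text \<open>Here a, b, c are three consecutive interval vertices of the cycle, d and e the cycle
  neighbours of a and c beyond them, and w, z the pendant path at b.\<close>
lemma ISeg_bridge_pendant_crossing:
  assumes ISeg: "\<not> is_PSeg a" "\<not> is_PSeg b" "\<not> is_PSeg c"
    and "meets a b" "meets b c" "left_of a c"
    and "meets d a" "\<not> meets d b" "meets e c" "\<not> meets e b"
    and "meets w b" "\<not> meets w a" "\<not> meets w c" "meets w z" "\<not> meets z b"
  shows "is_PSeg w \<and> left_of a w \<and> left_of w c"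
proof -
  have ab: "lft b \<le> rgt a" and bc: "lft c \<le> rgt b"
    using ISeg \<open>meets a b\<close> \<open>meets b c\<close> by (simp_all add: meets_ISeg)
  have "lft a < lft b"
  proof (rule ccontr)
    assume "\<not> lft a < lft b"
    moreover have "rgt a \<le> rgt b"
      using \<open>left_of a c\<close> bc by (simp add: left_of_def)
    ultimately have "meets d b"
      using meets_ISeg_mono[of a b d] ISeg \<open>meets d a\<close> by simp
    with \<open>\<not> meets d b\<close> show False ..
  qed
  moreover have "rgt b < rgt c"
  proof (rule ccontr)
    assume "\<not> rgt b < rgt c"
    moreover have "lft b \<le> lft c"
      using \<open>left_of a c\<close> ab by (simp add: left_of_def)
    ultimately have "meets e b"
      using meets_ISeg_mono[of c b e] ISeg \<open>meets e c\<close> by simp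
    with \<open>\<not> meets e b\<close> show False ..
  qed
  moreover have "lft w \<le> rgt b" "lft b \<le> rgt w"
    using ISeg \<open>meets w b\<close> by (simp_all add: meets_ISeg)
  ultimately have between: "left_of a w" "left_of w c"
    using not_meets_left_of[OF \<open>\<not> meets w a\<close>] not_meets_left_of[OF \<open>\<not> meets w c\<close>]
    by (auto simp: left_of_def)
  have "is_PSeg w"
  proof (rule ccontr)
    assume "\<not> is_PSeg w"
    moreover have "lft b \<le> lft w" "rgt w \<le> rgt b"
      using between ab bc by (simp_all add: left_of_def)
    ultimately have "meets z b"
      using meets_ISeg_mono[of w b z] ISeg \<open>meets w z\<close> by (simp add: meets_sym)
    with \<open>\<not> meets z b\<close> show False ..
  qed
  with between show ?thesis by simp
qed

lemma mod_add_neq: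
  fixes i d n :: nat
  assumes "0 < d" "d < n"
  shows "(i + d) mod n \<noteq> i mod n"
  using assms by (simp add: mod_eq_dvd_iff_nat nat_dvd_not_less)

lemma nat_transition:
  fixes Q :: "nat \<Rightarrow> bool"
  assumes "Q a" "\<not> Q b" "a \<le> b"
  obtains x where "Q x" "\<not> Q (Suc x)"
proof (rule ccontr)
  assume "\<not> thesis"
  with that have "Q x \<Longrightarrow> Q (Suc x)" for x by blast
  with \<open>a \<le> b\<close> \<open>Q a\<close> have "Q b"
    by (induction rule: dec_induct) simp_all
  with \<open>\<not> Q b\<close> show False ..
qed

locale Gn_ipseg_model =
  fixes n :: nat and \<sigma> :: "nat \<times> nat \<Rightarrow> ipseg"
  assumes n_ge_7: "7 \<le> n"
    and adj_iff_meets: "\<And>u v. u \<in> Gn_verts n \<Longrightarrow> v \<in> Gn_verts n \<Longrightarrow> u \<noteq> v \<Longrightarrow>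
      Gn_adj n u v \<longleftrightarrow> meets (\<sigma> u) (\<sigma> v)"
begin

definition vseg :: "nat \<Rightarrow> ipseg" where "vseg i = \<sigma> (0, i mod n)"
definition wseg :: "nat \<Rightarrow> ipseg" where "wseg i = \<sigma> (1, i mod n)"
definition zseg :: "nat \<Rightarrow> ipseg" where "zseg i = \<sigma> (2, i mod n)"

lemma vseg_add_period [simp]: "vseg (i + n) = vseg i"
  by (simp add: vseg_def)

lemma Gn_verts_mod [simp]: "k < 3 \<Longrightarrow> (k, i mod n) \<in> Gn_verts n"
  using n_ge_7 by (simp add: Gn_verts_def)

lemma meets_vseg_iff:
  "meets (vseg i) (vseg j) \<longleftrightarrow> i mod n = j mod n \<or> Suc i mod n = j mod n \<or> Suc j mod n = i mod n"
proof (cases "i mod n = j mod n")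
  case True
  then show ?thesis by (simp add: vseg_def meets_refl)
next
  case False
  then have "meets (vseg i) (vseg j) \<longleftrightarrow> Gn_adj n (0, i mod n) (0, j mod n)"
    by (simp add: vseg_def adj_iff_meets)
  with False show ?thesis
    by (auto simp: Gn_adj_def mod_Suc_eq)
qed

lemma meets_vseg_Suc: "meets (vseg i) (vseg (Suc i))"
  by (simp add: meets_vseg_iff)

lemma not_meets_vseg_far:
  assumes "i + 2 \<le> j" "j + 2 \<le> i + n"
  shows "\<not> meets (vseg i) (vseg j)"
proof -
  define d where "d = j - i"
  with assms have j: "j = i + d" "2 \<le> d" "d + 2 \<le> n"
    by simp_all
  have "(i + d) mod n \<noteq> i mod n" "(Suc i + (d - 1)) mod n \<noteq> Suc i mod n"
    "(i + Suc d) mod n \<noteq> i mod n"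
    using j by (intro mod_add_neq; simp)+
  moreover have "Suc i + (d - 1) = i + d"
    using j by simp
  ultimately show ?thesis
    unfolding meets_vseg_iff j(1) by (metis add_Suc_right)
qed

lemma meets_wseg_vseg_iff: "meets (wseg i) (vseg j) \<longleftrightarrow> i mod n = j mod n"
  by (simp add: wseg_def vseg_def flip: adj_iff_meets) (auto simp: Gn_adj_def)

lemma meets_wseg_zseg: "meets (wseg i) (zseg i)"
  by (simp add: wseg_def zseg_def flip: adj_iff_meets) (simp add: Gn_adj_def)

lemma not_meets_zseg_vseg: "\<not> meets (zseg i) (vseg j)"
  by (simp add: zseg_def vseg_def flip: adj_iff_meets) (simp add: Gn_adj_def doubleton_eq_iff)

lemma vseg_path_same_side:
  assumes "\<And>m. m \<le> L \<Longrightarrow> \<not> meets (vseg (a + m)) p"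
    and "\<And>m. \<not> is_PSeg p \<Longrightarrow> m < L \<Longrightarrow> is_PSeg (vseg (a + m)) \<Longrightarrow> \<not> is_PSeg (vseg (Suc (a + m)))"
  shows "left_of (vseg (a + L)) p \<longleftrightarrow> left_of (vseg a) p"
  using assms
proof (induction L)
  case (Suc L)
  have "left_of (vseg (a + L)) p \<longleftrightarrow> left_of (vseg (Suc (a + L))) p"
  proof (rule meets_same_side)
    show "meets (vseg (a + L)) (vseg (Suc (a + L)))"
      by (rule meets_vseg_Suc)
    show "\<not> meets (vseg (a + L)) p" "\<not> meets (vseg (Suc (a + L))) p"
      using Suc.prems(1)[of L] Suc.prems(1)[of "Suc L"] by simp_all
    show "is_PSeg p" if "is_PSeg (vseg (a + L))" "is_PSeg (vseg (Suc (a + L)))"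
      using Suc.prems(2)[of L] that by blast
  qed
  with Suc show ?case by simp
qed simp

lemma far_triple_impossible:
  assumes PSeg: "is_PSeg (vseg x)" "is_PSeg (vseg (x + i))"
    and far: "2 \<le> i" "i + 2 \<le> j" "j + 2 \<le> n"
    and third: "is_PSeg (vseg (x + j)) \<or> (\<forall>m. 0 < m \<longrightarrow> m < i \<longrightarrow> \<not> is_PSeg (vseg (x + m)))"
  shows False
proof -
  let ?p = "vseg x" and ?q = "vseg (x + i)" and ?u = "vseg (x + j)"
  have disjoint: "\<not> meets ?p ?q" "\<not> meets ?q ?u" "\<not> meets ?p ?u"
    using far by (simp_all add: not_meets_vseg_far)
  text \<open>Each of the three is avoided by the arc of the cycle joining the other two.\<close>
  have "left_of (vseg (x + i + (j - i))) ?p \<longleftrightarrow> left_of ?q ?p"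
    using PSeg far by (intro vseg_path_same_side) (simp_all add: meets_sym not_meets_vseg_far)
  moreover have "left_of (vseg (x + j + (n - j))) ?q \<longleftrightarrow> left_of ?u ?q"
    using PSeg far by (intro vseg_path_same_side) (simp_all add: meets_sym not_meets_vseg_far)
  moreover have "left_of (vseg (x + i)) ?u \<longleftrightarrow> left_of ?p ?u"
  proof (rule vseg_path_same_side)
    show "\<not> meets (vseg (x + m)) ?u" if "m \<le> i" for m
      using that far by (simp add: not_meets_vseg_far)
    show "\<not> is_PSeg (vseg (Suc (x + m)))"
      if "\<not> is_PSeg ?u" "m < i" "is_PSeg (vseg (x + m))" for m
    proof -
      from third that(1) have interior: "\<And>k. 0 < k \<Longrightarrow> k < i \<Longrightarrow> \<not> is_PSeg (vseg (x + k))"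
        by blast
      with that(2,3) have "m = 0"
        by blast
      with interior[of 1] far(1) show ?thesis
        by simp
    qed
  qed
  moreover have "x + i + (j - i) = x + j" "x + j + (n - j) = x + n"
    using far by simp_all
  ultimately show False
    using one_of_three_separates[OF disjoint(1,2,3)] by auto
qed

lemma no_three_consecutive_ISeg:
  assumes ISeg: "\<not> is_PSeg (vseg x)" "\<not> is_PSeg (vseg (x + 1))" "\<not> is_PSeg (vseg (x + 2))"
  shows False
proof -
  let ?a = "vseg x" and ?b = "vseg (x + 1)" and ?c = "vseg (x + 2)"
  let ?d = "vseg (x + (n - 1))" and ?e = "vseg (x + 3)" and ?w = "wseg (x + 1)" and ?z = "zseg (x + 1)"
  have "Suc (x + (n - 1)) = x + n"
    using n_ge_7 by simp
  then have cycle: "meets ?a ?b" "meets ?b ?c" "meets ?d ?a" "meets ?e ?c"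
    using meets_vseg_Suc[of x] meets_vseg_Suc[of "x + 1"] meets_vseg_Suc[of "x + (n - 1)"]
      meets_vseg_Suc[of "x + 2"] by (simp_all add: meets_sym numeral_3_eq_3)
  have chords: "\<not> meets ?a ?c" "\<not> meets ?d ?b" "\<not> meets ?e ?b"
    using n_ge_7 not_meets_vseg_far[of "x + 1" "x + (n - 1)"] not_meets_vseg_far[of "x + 1" "x + 3"]
    by (simp_all add: not_meets_vseg_far meets_sym)
  have "(x + 1) mod n \<noteq> x mod n" "(x + 1 + 1) mod n \<noteq> (x + 1) mod n"
    using n_ge_7 by (intro mod_add_neq; simp)+
  then have pendant: "meets ?w ?b" "\<not> meets ?w ?a" "\<not> meets ?w ?c" "meets ?w ?z" "\<not> meets ?z ?b"
    by (simp_all add: meets_wseg_vseg_iff meets_wseg_zseg not_meets_zseg_vseg)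
  have swapped: "meets ?c ?b" "meets ?b ?a"
    using cycle by (simp_all add: meets_sym)
  from chords(1) consider "left_of ?a ?c" | "left_of ?c ?a"
    using not_meets_left_of by blast
  then have crossing: "is_PSeg ?w \<and> (left_of ?a ?w \<and> left_of ?w ?c \<or> left_of ?c ?w \<and> left_of ?w ?a)"
  proof cases
    case 1
    from ISeg_bridge_pendant_crossing[OF ISeg cycle(1,2) 1 cycle(3) chords(2) cycle(4) chords(3) pendant]
    show ?thesis by blast
  next
    case 2
    from ISeg_bridge_pendant_crossing[OF ISeg(3,2,1) swapped 2 cycle(4) chords(3) cycle(3) chords(2)
        pendant(1,3,2,4,5)]
    show ?thesis by blast
  qed
  text \<open>The rest of the cycle joins \<open>?c\<close> to \<open>?a\<close> without touching \<open>?w\<close>.\<close>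
  have "left_of (vseg (x + 2 + (n - 2))) ?w \<longleftrightarrow> left_of ?c ?w"
  proof (rule vseg_path_same_side)
    fix m assume "m \<le> n - 2"
    then have "(x + 1 + Suc m) mod n \<noteq> (x + 1) mod n"
      using n_ge_7 by (intro mod_add_neq) simp_all
    then show "\<not> meets (vseg (x + 2 + m)) ?w"
      by (simp add: meets_sym meets_wseg_vseg_iff)
  qed (use crossing in simp)
  moreover have "x + 2 + (n - 2) = x + n"
    using n_ge_7 by simp
  ultimately have "left_of ?a ?w \<longleftrightarrow> left_of ?c ?w"
    by (metis vseg_add_period)
  with crossing show False
    using left_of_asym by blast
qed

lemma ISeg_imp_PSeg_two_later:
  assumes "\<not> is_PSeg (vseg x)"
  shows "is_PSeg (vseg (x + 2))"
proof (rule ccontr)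
  assume "\<not> is_PSeg (vseg (x + 2))"
  moreover have "\<not> meets (vseg x) (vseg (x + 2))"
    using n_ge_7 by (simp add: not_meets_vseg_far)
  moreover have "meets (vseg x) (vseg (x + 1))" "meets (vseg (x + 1)) (vseg (x + 2))"
    using meets_vseg_Suc[of x] meets_vseg_Suc[of "x + 1"] by simp_all
  ultimately show False
    using assms ISeg_PSeg_ISeg_meets no_three_consecutive_ISeg by blast
qed

lemma model_inconsistent: False
proof (cases "\<forall>i. is_PSeg (vseg i)")
  case True
  then show False
    using far_triple_impossible[of 0 2 4] n_ge_7 by simp
next
  case False
  then obtain y where "\<not> is_PSeg (vseg y)"
    by blast
  then have "is_PSeg (vseg (y + 2))" "\<not> is_PSeg (vseg (y + n))" "y + 2 \<le> y + n"
    using ISeg_imp_PSeg_two_later[of y] n_ge_7 by simp_all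
  then obtain x where x: "is_PSeg (vseg x)" "\<not> is_PSeg (vseg (Suc x))"
    using nat_transition[of "\<lambda>i. is_PSeg (vseg i)"] by blast
  have "is_PSeg (vseg (x + 3))"
    using ISeg_imp_PSeg_two_later[of "Suc x"] x(2) by (simp add: numeral_3_eq_3)
  show False
  proof (cases "is_PSeg (vseg (x + 2))")
    case True
    then show False
      using far_triple_impossible[of x 2 4] x n_ge_7 by (auto simp: less_2_cases_iff)
  next
    case False
    with \<open>is_PSeg (vseg (x + 3))\<close> show False
      using far_triple_impossible[of x 3 5] x n_ge_7 by (auto simp: less_Suc_eq numeral_3_eq_3)
  qed
qed

end

lemma seg_set_eq_ipseg_set:
  assumes "{c, d} = {a, b}" "is_perm_seg a b s \<or> is_int_seg c s"
  shows "\<exists>x. seg_set s = ipseg_set c d x"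
proof -
  obtain x1 y1 x2 y2 where s: "s = ((x1, y1), (x2, y2))"
    by (metis prod.collapse)
  from assms consider "y1 = c" "y2 = d" | "y1 = d" "y2 = c" | "y1 = c" "y2 = c"
    by (auto simp: s is_perm_seg_def is_int_seg_def doubleton_eq_iff)
  then show ?thesis
  proof cases
    case 1
    then have "seg_set s = ipseg_set c d (PSeg x1 x2)"
      by (simp add: s seg_set_def)
    then show ?thesis ..
  next
    case 2
    then have "seg_set s = ipseg_set c d (PSeg x2 x1)"
      by (simp add: s seg_set_def closed_segment_commute)
    then show ?thesis ..
  next
    case 3
    then have "seg_set s = ipseg_set c d (ISeg x1 x2)"
      by (simp add: s seg_set_def)
    then show ?thesis ..
  qed
qed

theorem mainTheorem8:
  fixes n :: nat and a b :: real
  assumes "n \<ge> 7" and "a \<noteq> b"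
  shows "\<not> ipseg_star_graph a b (Gn_verts n) (Gn_adj n)"
proof
  assume "ipseg_star_graph a b (Gn_verts n) (Gn_adj n)"
  then obtain c f where "c \<in> {a, b}"
    and segs: "\<forall>v \<in> Gn_verts n. is_perm_seg a b (f v) \<or> is_int_seg c (f v)"
    and adj: "\<forall>u \<in> Gn_verts n. \<forall>v \<in> Gn_verts n. u \<noteq> v \<longrightarrow>
      (Gn_adj n u v \<longleftrightarrow> seg_set (f u) \<inter> seg_set (f v) \<noteq> {})"
    unfolding ipseg_star_graph_def by (elim bexE exE conjE) (rule that)
  define d where "d = (if c = a then b else a)"
  have "c \<noteq> d" "{c, d} = {a, b}"
    using \<open>c \<in> {a, b}\<close> \<open>a \<noteq> b\<close> by (auto simp: d_def)
  with segs have "\<forall>v \<in> Gn_verts n. \<exists>x. seg_set (f v) = ipseg_set c d x"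
    using seg_set_eq_ipseg_set by blast
  then have "\<exists>\<sigma>. \<forall>v \<in> Gn_verts n. seg_set (f v) = ipseg_set c d (\<sigma> v)"
    by (rule bchoice)
  then obtain \<sigma> where \<sigma>: "\<forall>v \<in> Gn_verts n. seg_set (f v) = ipseg_set c d (\<sigma> v)" ..
  have "Gn_adj n u v \<longleftrightarrow> meets (\<sigma> u) (\<sigma> v)"
    if "u \<in> Gn_verts n" "v \<in> Gn_verts n" "u \<noteq> v" for u v
    using adj \<sigma> that ipseg_sets_intersect_iff[OF \<open>c \<noteq> d\<close>] by simp
  with \<open>n \<ge> 7\<close> interpret Gn_ipseg_model n \<sigma>
    by unfold_locales
  show False
    by (rule model_inconsistent)
qed

end
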